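(* Fix $\Gamma z_0\in\mathcal M$. For any sequence of positive numbers $\{c_n\}_{n\in\mathbb N}$ there exists a sequence $\{y_n\}_{n\in\mathbb N}$ with $0<y_n<c_n$ for every $n$ such that for Lebesgue-almost every $x\in\mathbb R/\mathbb Z$, $$\limsup_{n\to\infty}\frac{\inf_{\Gamma z\in\mathcal R_n(x,y_n)}d_{\mathcal M}(\Gamma z_0,\Gamma z)}{\log\log n}\ge1.$$
   Context: $\mathcal M=\Gamma\backslash\mathbb H$ with $\Gamma=\mathrm{SL}_2(\mathbb Z)$; $d_{\mathcal M}(\Gamma z_1,\Gamma z_2)=\inf_{\gamma\in\Gamma}d_{\mathbb H}(\gamma z_1,z_2)$ with $d_{\mathbb H}$ the hyperbolic distance. $\mathcal R_n(x,y)=\{\Gamma(x+\tfrac jn+iy):0\le j\le n-1\}$. *)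

theory Defs
  imports "HOL-Analysis.Analysis"
begin

definition upper_half_plane :: "complex set" where
  "upper_half_plane = {z. Im z > 0}"

definition hyp_dist :: "complex \<Rightarrow> complex \<Rightarrow> real" where
  "hyp_dist z w = arcosh (1 + (cmod (z - w))\<^sup>2 / (2 * Im z * Im w))"

definition SL2Z :: "(int \<times> int \<times> int \<times> int) set" where
  "SL2Z = {(a, b, c, d). a * d - b * c = 1}"

fun moebius_act :: "int \<times> int \<times> int \<times> int \<Rightarrow> complex \<Rightarrow> complex" where
  "moebius_act (a, b, c, d) z = (of_int a * z + of_int b) / (of_int c * z + of_int d)"

definition modular_dist :: "complex \<Rightarrow> complex \<Rightarrow> real" where
  "modular_dist z1 z2 = (INF g\<in>SL2Z. hyp_dist (moebius_act g z1) z2)"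

definition min_dist_Rn :: "complex \<Rightarrow> nat \<Rightarrow> real \<Rightarrow> real \<Rightarrow> real" where
  "min_dist_Rn z0 n x y =
     (INF j\<in>{0..<n}. modular_dist z0 (Complex (x + real j / real n) y))"

end

theory Submission
  imports Defs
begin

text \<open>If n k x lies within r of an integer a for some k \<le> K, then for every point
  z = x + j/n + i y of R_n(x, y) the lattice vector (n k, -(a + j k)) gives
  |n k z - (a + j k)|^2 = (n k x - a)^2 + (n k y)^2. When this is at most y / h, some element of
  SL2(Z) lifts z to height at least h, while the whole orbit of z0 stays below height
  max (Im z0) (1 / Im z0); for h = ln n all of R_n(x, y) is then at distance at least
  ln ln n - O(1) from the orbit of z0.

  The x with this property form neighbourhoods of the reduced fractions a / (n k), and an interval
  of length 1 / G contains about n K^2 / G of them. Taking K = K_n large compared with the size of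
  the grid of level n - 1 and refining that grid suitably, every cell of level n - 1 contains a
  proportion at least 1 / (128 n ln n) of cells of level n lying in these neighbourhoods. The
  proportions have divergent sum, so a Borel-Cantelli argument along the nested grids shows that
  almost every x lies in such cells for infinitely many n.\<close>

section \<open>Hyperbolic geometry\<close>

lemma SL2Z_iff [simp]: "(a, b, c, d) \<in> SL2Z \<longleftrightarrow> a * d - b * c = 1"
  by (simp add: SL2Z_def)

lemma moebius_denom_nonzero:
  assumes "(a, b, c, d) \<in> SL2Z" "Im z > 0"
  shows "of_int c * z + of_int d \<noteq> 0"
proof
  assume denom: "of_int c * z + of_int d = 0"
  then have "Im (of_int c * z + of_int d) = 0" by simp
  then have "c = 0" using assms(2) by simp
  with denom assms(1) show False by simp
qed

lemma Im_moebius_act: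
  assumes "(a, b, c, d) \<in> SL2Z"
  shows "Im (moebius_act (a, b, c, d) z) = Im z / (cmod (of_int c * z + of_int d))\<^sup>2"
proof -
  have "real_of_int a * real_of_int d - real_of_int b * real_of_int c = 1"
    using assms by (metis SL2Z_iff of_int_1 of_int_diff of_int_mult)
  then show ?thesis
    by (simp add: Im_divide' algebra_simps)
qed

lemma Im_moebius_act_pos:
  assumes "\<gamma> \<in> SL2Z" "Im z > 0"
  shows "Im (moebius_act \<gamma> z) > 0"
  using assms moebius_denom_nonzero[of _ _ _ _ z] Im_moebius_act[of _ _ _ _ z]
  by (cases \<gamma>) auto

lemma moebius_act_diff:
  assumes "(a, b, c, d) \<in> SL2Z" "of_int c * z + of_int d \<noteq> 0" "of_int c * w + of_int d \<noteq> 0"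
  shows "moebius_act (a, b, c, d) z - moebius_act (a, b, c, d) w
         = (z - w) / ((of_int c * z + of_int d) * (of_int c * w + of_int d))"
proof -
  have "(of_int a * of_int d - of_int b * of_int c :: complex) = 1"
    using assms(1) by (metis SL2Z_iff of_int_1 of_int_diff of_int_mult)
  moreover have "moebius_act (a, b, c, d) z - moebius_act (a, b, c, d) w
      = ((of_int a * of_int d - of_int b * of_int c) * (z - w))
        / ((of_int c * z + of_int d) * (of_int c * w + of_int d))"
    using assms(2,3) by (simp add: field_simps)
  ultimately show ?thesis by simp
qed

lemma moebius_act_moebius_act:
  assumes "of_int c' * z + of_int d' \<noteq> 0"
  shows "moebius_act (a, b, c, d) (moebius_act (a', b', c', d') z)
         = moebius_act (a * a' + b * c', a * b' + b * d', c * a' + d * c', c * b' + d * d') z"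
proof -
  let ?D = "of_int c' * z + of_int d'" and ?N = "of_int a' * z + of_int b'"
  have "of_int a * (?N / ?D) + of_int b = (of_int a * ?N + of_int b * ?D) / ?D"
    "of_int c * (?N / ?D) + of_int d = (of_int c * ?N + of_int d * ?D) / ?D"
    using assms by (simp_all add: field_simps)
  then have "moebius_act (a, b, c, d) (moebius_act (a', b', c', d') z)
      = ((of_int a * ?N + of_int b * ?D) / ?D) / ((of_int c * ?N + of_int d * ?D) / ?D)"
    by simp
  also have "\<dots> = (of_int a * ?N + of_int b * ?D) / (of_int c * ?N + of_int d * ?D)"
    using assms by simp
  also have "\<dots> = moebius_act (a * a' + b * c', a * b' + b * d', c * a' + d * c', c * b' + d * d') z"
    by (simp add: algebra_simps)
  finally show ?thesis .
qed

lemma hyp_dist_moebius_act: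
  assumes "\<gamma> \<in> SL2Z" "Im z > 0" "Im w > 0"
  shows "hyp_dist (moebius_act \<gamma> z) (moebius_act \<gamma> w) = hyp_dist z w"
proof -
  obtain a b c d where \<gamma>: "\<gamma> = (a, b, c, d)" by (cases \<gamma>)
  let ?A = "of_int c * z + of_int d" and ?B = "of_int c * w + of_int d"
  have SL: "(a, b, c, d) \<in> SL2Z" using assms(1) unfolding \<gamma> .
  have A: "?A \<noteq> 0" and B: "?B \<noteq> 0"
    using moebius_denom_nonzero[OF SL] assms(2,3) by auto
  have "(cmod (moebius_act \<gamma> z - moebius_act \<gamma> w))\<^sup>2 /
        (2 * Im (moebius_act \<gamma> z) * Im (moebius_act \<gamma> w))
      = ((cmod (z - w))\<^sup>2 / ((cmod ?A)\<^sup>2 * (cmod ?B)\<^sup>2))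
        / (2 * (Im z / (cmod ?A)\<^sup>2) * (Im w / (cmod ?B)\<^sup>2))"
    unfolding \<gamma> by (simp only: moebius_act_diff[OF SL A B] Im_moebius_act[OF SL] norm_divide
        norm_mult power_divide power_mult_distrib)
  also have "\<dots> = (cmod (z - w))\<^sup>2 / (2 * Im z * Im w)"
    using A B by (simp add: field_simps)
  finally show ?thesis unfolding hyp_dist_def by simp
qed

lemma ln_Im_div_le_hyp_dist:
  assumes "Im z > 0" "Im w > 0"
  shows "ln (Im w / Im z) \<le> hyp_dist z w"
proof -
  let ?s = "Im z" and ?t = "Im w"
  have st: "2 * ?s * ?t > 0" using assms by simp
  have "\<bar>?s - ?t\<bar> \<le> cmod (z - w)" using abs_Im_le_cmod[of "z - w"] by simp
  then have "(?s - ?t)\<^sup>2 \<le> (cmod (z - w))\<^sup>2" by (metis abs_ge_zero power2_abs power_mono)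
  then have "(?s\<^sup>2 + ?t\<^sup>2) / (2 * ?s * ?t) \<le> (2 * ?s * ?t + (cmod (z - w))\<^sup>2) / (2 * ?s * ?t)"
    using st by (intro divide_right_mono) (auto simp: power2_diff)
  also have "\<dots> = 1 + (cmod (z - w))\<^sup>2 / (2 * ?s * ?t)"
    using st assms by (simp add: add_divide_distrib)
  finally have upper: "(?s\<^sup>2 + ?t\<^sup>2) / (2 * ?s * ?t) \<le> 1 + (cmod (z - w))\<^sup>2 / (2 * ?s * ?t)" .
  have lower: "1 \<le> (?s\<^sup>2 + ?t\<^sup>2) / (2 * ?s * ?t)"
    using st sum_squares_bound[of ?s ?t] by (simp add: power2_eq_square)
  show ?thesis
  proof (cases "?s \<le> ?t")
    case False
    then have "ln (?t / ?s) \<le> 0" using assms by simp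
    moreover have "0 \<le> hyp_dist z w" unfolding hyp_dist_def
      using lower upper by (intro arcosh_nonneg_real) linarith
    ultimately show ?thesis by linarith
  next
    case True
    have cosh_ln: "cosh (ln (?t / ?s)) = (?s\<^sup>2 + ?t\<^sup>2) / (2 * ?s * ?t)"
      using assms by (simp add: cosh_ln_real field_simps power2_eq_square)
    have "ln (?t / ?s) = arcosh (cosh (ln (?t / ?s)))"
      using True assms by (simp add: arcosh_cosh_real)
    also have "\<dots> \<le> hyp_dist z w" unfolding hyp_dist_def cosh_ln
      using lower upper arcosh_less_iff_real[of "1 + (cmod (z - w))\<^sup>2 / (2 * ?s * ?t)"
          "(?s\<^sup>2 + ?t\<^sup>2) / (2 * ?s * ?t)"]
      by linarith
    finally show ?thesis .
  qed
qed

lemma cmod_lattice_point_sq_ge: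
  fixes c d :: int
  assumes "c \<noteq> 0 \<or> d \<noteq> 0" "Im z > 0"
  shows "min 1 ((Im z)\<^sup>2) \<le> (cmod (of_int c * z + of_int d))\<^sup>2"
proof -
  have sq_ge_one: "1 \<le> (real_of_int k)\<^sup>2" if "k \<noteq> 0" for k :: int
  proof -
    have "1 \<le> \<bar>real_of_int k\<bar>" using that by linarith
    then show ?thesis by (metis one_le_power power2_abs)
  qed
  have cmod_sq: "(cmod (of_int c * z + of_int d))\<^sup>2
      = (of_int c * Re z + of_int d)\<^sup>2 + (of_int c * Im z)\<^sup>2"
    by (simp add: cmod_power2)
  show ?thesis
  proof (cases "c = 0")
    case True
    then show ?thesis using assms(1) sq_ge_one[of d] cmod_sq by simp
  next
    case False
    then have "(Im z)\<^sup>2 \<le> (of_int c * Im z)\<^sup>2"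
      using sq_ge_one[OF False] by (simp add: power_mult_distrib mult_le_cancel_right1)
    moreover have "min 1 ((Im z)\<^sup>2) \<le> (Im z)\<^sup>2" "0 \<le> (of_int c * Re z + of_int d)\<^sup>2" by simp_all
    ultimately show ?thesis using cmod_sq by linarith
  qed
qed

lemma Im_moebius_act_le:
  assumes "\<gamma> \<in> SL2Z" "Im z > 0"
  shows "Im (moebius_act \<gamma> z) \<le> max (Im z) (1 / Im z)"
proof -
  obtain a b c d where \<gamma>: "\<gamma> = (a, b, c, d)" by (cases \<gamma>)
  have "c \<noteq> 0 \<or> d \<noteq> 0" using assms(1) unfolding \<gamma> by auto
  then have denom: "min 1 ((Im z)\<^sup>2) \<le> (cmod (of_int c * z + of_int d))\<^sup>2"
    using assms(2) by (rule cmod_lattice_point_sq_ge)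
  have "Im (moebius_act \<gamma> z) = Im z / (cmod (of_int c * z + of_int d))\<^sup>2"
    using assms(1) unfolding \<gamma> by (rule Im_moebius_act)
  also have "\<dots> \<le> Im z / min 1 ((Im z)\<^sup>2)"
  proof -
    have "min 1 ((Im z)\<^sup>2) > 0" using assms(2) by simp
    moreover from this have "(cmod (of_int c * z + of_int d))\<^sup>2 > 0" using denom by linarith
    ultimately show ?thesis using assms(2) denom by (intro divide_left_mono) auto
  qed
  also have "\<dots> \<le> max (Im z) (1 / Im z)"
    using assms(2) by (cases "Im z \<le> 1") (auto simp: min_def max_def power2_eq_square field_simps)
  finally show ?thesis .
qed

lemma Im_moebius_act_orbit_le:
  assumes "\<gamma> \<in> SL2Z" "g \<in> SL2Z" "Im z > 0"
  shows "Im (moebius_act \<gamma> (moebius_act g z)) \<le> max (Im z) (1 / Im z)"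
proof -
  obtain a b c d where \<gamma>: "\<gamma> = (a, b, c, d)" by (cases \<gamma>)
  obtain a' b' c' d' where g: "g = (a', b', c', d')" by (cases g)
  have "moebius_act \<gamma> (moebius_act g z)
      = moebius_act (a * a' + b * c', a * b' + b * d', c * a' + d * c', c * b' + d * d') z"
    using assms(2,3) moebius_denom_nonzero unfolding \<gamma> g by (intro moebius_act_moebius_act) blast
  moreover have "(a * a' + b * c', a * b' + b * d', c * a' + d * c', c * b' + d * d') \<in> SL2Z"
  proof -
    have "(a * a' + b * c') * (c * b' + d * d') - (a * b' + b * d') * (c * a' + d * c')
        = (a * d - b * c) * (a' * d' - b' * c')"
      by (simp add: algebra_simps)
    then show ?thesis using assms(1,2) unfolding \<gamma> g by simp
  qed
  ultimately show ?thesis by (metis Im_moebius_act_le assms(3))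
qed

lemma exists_SL2Z_Im_ge:
  fixes c d :: int
  assumes cd: "c \<noteq> 0 \<or> d \<noteq> 0" and z: "Im z > 0" and h: "h > 0"
    and small: "(cmod (of_int c * z + of_int d))\<^sup>2 \<le> Im z / h"
  shows "\<exists>\<gamma>\<in>SL2Z. h \<le> Im (moebius_act \<gamma> z)"
proof -
  define g where "g = gcd c d"
  define c' where "c' = c div g"
  define d' where "d' = d div g"
  have g_pos: "g > 0" unfolding g_def using cd by simp
  have "coprime c' d'" unfolding c'_def d'_def g_def using cd div_gcd_coprime by blast
  then obtain u v where uv: "u * c' + v * d' = 1"
    using bezout_int[of c' d'] by (auto simp: coprime_iff_gcd_eq_1)
  have \<gamma>: "(v, -u, c', d') \<in> SL2Z" using uv by (simp add: algebra_simps)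
  have "c = c' * g" "d = d' * g" unfolding c'_def d'_def g_def by simp_all
  then have "of_int c * z + of_int d = of_int g * (of_int c' * z + of_int d')"
    by (simp add: algebra_simps)
  then have "cmod (of_int c' * z + of_int d') \<le> cmod (of_int c * z + of_int d)"
    using g_pos by (simp add: norm_mult mult_le_cancel_right1)
  then have small': "(cmod (of_int c' * z + of_int d'))\<^sup>2 \<le> Im z / h"
    using small by (meson norm_ge_zero order_trans power_mono)
  have "(cmod (of_int c' * z + of_int d'))\<^sup>2 > 0"
    using moebius_denom_nonzero[OF \<gamma> z] by simp
  then have "Im z / (Im z / h) \<le> Im z / (cmod (of_int c' * z + of_int d'))\<^sup>2"
    using small' z h by (intro divide_left_mono) auto
  also have "\<dots> = Im (moebius_act (v, -u, c', d') z)"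
    by (rule Im_moebius_act[OF \<gamma>, symmetric])
  finally have "h \<le> Im (moebius_act (v, -u, c', d') z)"
    using z h by simp
  with \<gamma> show ?thesis by blast
qed

lemma ln_Im_moebius_act_le_modular_dist:
  assumes \<gamma>: "\<gamma> \<in> SL2Z" and z0: "Im z0 > 0" and z: "Im z > 0"
  shows "ln (Im (moebius_act \<gamma> z)) - ln (max (Im z0) (1 / Im z0)) \<le> modular_dist z0 z"
  unfolding modular_dist_def
proof (rule cINF_greatest)
  have "(1, 0, 0, 1) \<in> SL2Z" by simp
  then show "SL2Z \<noteq> {}" by blast
next
  fix g assume g: "g \<in> SL2Z"
  let ?M = "max (Im z0) (1 / Im z0)"
  let ?w = "moebius_act \<gamma> (moebius_act g z0)"
  have gz0: "Im (moebius_act g z0) > 0" using Im_moebius_act_pos[OF g z0] .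
  have w_pos: "Im ?w > 0" using Im_moebius_act_pos[OF \<gamma> gz0] .
  have w_le: "Im ?w \<le> ?M" using Im_moebius_act_orbit_le[OF \<gamma> g z0] .
  have \<gamma>z: "Im (moebius_act \<gamma> z) > 0" using Im_moebius_act_pos[OF \<gamma> z] .
  have "ln (Im (moebius_act \<gamma> z)) - ln ?M \<le> ln (Im (moebius_act \<gamma> z)) - ln (Im ?w)"
    using w_pos w_le by simp
  also have "\<dots> = ln (Im (moebius_act \<gamma> z) / Im ?w)"
    using w_pos \<gamma>z by (simp add: ln_div)
  also have "\<dots> \<le> hyp_dist ?w (moebius_act \<gamma> z)"
    using w_pos \<gamma>z by (rule ln_Im_div_le_hyp_dist)
  also have "\<dots> = hyp_dist (moebius_act g z0) z"
    using hyp_dist_moebius_act[OF \<gamma> gz0 z] .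
  finally show "ln (Im (moebius_act \<gamma> z)) - ln ?M \<le> hyp_dist (moebius_act g z0) z" .
qed

lemma min_dist_Rn_ge:
  fixes n k :: nat and a :: int
  assumes z0: "Im z0 > 0" and n: "n \<ge> 1" and k: "k \<ge> 1" and y: "y > 0" and h: "h > 0"
    and close: "\<bar>real n * real k * x - of_int a\<bar> \<le> r"
    and low: "r\<^sup>2 + (real n * real k * y)\<^sup>2 \<le> y / h"
  shows "ln h - ln (max (Im z0) (1 / Im z0)) \<le> min_dist_Rn z0 n x y"
  unfolding min_dist_Rn_def
proof (rule cINF_greatest)
  show "{0..<n} \<noteq> {}" using n by simp
next
  fix j assume "j \<in> {0..<n}"
  define z where "z = Complex (x + real j / real n) y"
  define c :: int where "c = int n * int k"
  define d :: int where "d = - (a + int j * int k)"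
  have "of_int c * z + of_int d = Complex (real n * real k * x - of_int a) (real n * real k * y)"
    unfolding z_def c_def d_def using n by (simp add: Complex_eq field_simps)
  then have "(cmod (of_int c * z + of_int d))\<^sup>2
      = (real n * real k * x - of_int a)\<^sup>2 + (real n * real k * y)\<^sup>2"
    by (simp add: cmod_power2)
  also have "\<dots> \<le> r\<^sup>2 + (real n * real k * y)\<^sup>2"
    using close by (metis abs_ge_zero add_right_mono power2_abs power_mono)
  also have "\<dots> \<le> Im z / h"
    using low unfolding z_def by simp
  finally have "\<exists>\<gamma>\<in>SL2Z. h \<le> Im (moebius_act \<gamma> z)"
    using n k y h by (intro exists_SL2Z_Im_ge[of c d]) (auto simp: z_def c_def)
  then obtain \<gamma> where \<gamma>: "\<gamma> \<in> SL2Z" and high: "h \<le> Im (moebius_act \<gamma> z)" by blast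
  have "ln h \<le> ln (Im (moebius_act \<gamma> z))" using h high by simp
  moreover have "ln (Im (moebius_act \<gamma> z)) - ln (max (Im z0) (1 / Im z0)) \<le> modular_dist z0 z"
    using ln_Im_moebius_act_le_modular_dist[OF \<gamma> z0] y unfolding z_def by simp
  ultimately show "ln h - ln (max (Im z0) (1 / Im z0)) \<le> modular_dist z0 (Complex (x + real j / real n) y)"
    unfolding z_def by linarith
qed

section \<open>Counting reduced fractions\<close>

lemma sum_inverse_squares_from_2_le: "(\<Sum>m\<in>{2..K}. 1 / (real m)\<^sup>2) \<le> 3 / 4"
proof -
  have telescope: "(\<Sum>m\<in>{2..K}. 1 / (real m)\<^sup>2) \<le> 3 / 4 - 1 / real K" if "K \<ge> 2" for K
    using that
  proof (induction K rule: nat_induct_at_least)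
    case base
    then show ?case by (simp add: power2_eq_square)
  next
    case (Suc K)
    have "1 / (real K + 1)\<^sup>2 \<le> 1 / (real K * (real K + 1))"
      using Suc.hyps by (intro divide_left_mono) (auto simp: power2_eq_square)
    also have "\<dots> = 1 / real K - 1 / (real K + 1)"
      using Suc.hyps by (simp add: field_simps)
    finally show ?case
      using Suc by (simp add: sum.atLeast_Suc_atMost_Suc_shift add.commute)
  qed
  show ?thesis
  proof (cases "K \<ge> 2")
    case True
    moreover have "0 \<le> 1 / real K" by simp
    ultimately show ?thesis using telescope[OF True] by linarith
  qed auto
qed

lemma sum_inverse_le_two_sqrt: "(\<Sum>m\<in>{1..K}. 1 / real m) \<le> 2 * sqrt (real K)"
proof (induction K)
  case (Suc K)
  define s t where "s = sqrt (real K)" and "t = sqrt (real K + 1)"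
  have t_ge: "t \<ge> 1" "t \<ge> s" unfolding s_def t_def by auto
  have "(t - s) * (t + s) = 1" unfolding s_def t_def by (simp add: algebra_simps)
  moreover have "(t - s) * (t + s) \<le> (t - s) * (2 * t)"
    using t_ge by (intro mult_left_mono) auto
  ultimately have "1 \<le> (2 * t - 2 * s) * t" by (simp add: algebra_simps)
  also have "\<dots> \<le> (2 * t - 2 * s) * t\<^sup>2"
    using t_ge by (intro mult_left_mono) (auto simp: power2_eq_square)
  finally have "1 / (real K + 1) \<le> 2 * t - 2 * s"
    using t_ge unfolding t_def by (simp add: field_simps)
  then show ?case
    using Suc unfolding s_def t_def by (simp add: add.commute)
qed simp

lemma card_integers_between_ge: "v - u - 1 \<le> real (card {\<lceil>u\<rceil>..\<lfloor>v\<rfloor>})"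
  using of_int_floor_le[of v] le_of_int_ceiling[of u] real_of_int_floor_gt_diff_one[of v]
    ceiling_correct[of u]
  by (simp add: algebra_simps)

lemma card_integers_between_le:
  assumes "u \<le> v"
  shows "real (card {\<lceil>u\<rceil>..\<lfloor>v\<rfloor>}) \<le> v - u + 1"
proof -
  have "of_int (\<lfloor>v\<rfloor> - \<lceil>u\<rceil> + 1) \<le> v - u + 1"
    using of_int_floor_le[of v] le_of_int_ceiling[of u]
    by (simp only: of_int_add of_int_diff of_int_1)
  then show ?thesis using assms by (cases "\<lfloor>v\<rfloor> - \<lceil>u\<rceil> + 1 \<ge> 0") auto
qed

definition fraction_pairs :: "real \<Rightarrow> real \<Rightarrow> nat \<Rightarrow> (nat \<times> int) set" where
  "fraction_pairs \<alpha> \<beta> K = (SIGMA k:{1..K}. {\<lceil>\<alpha> * real k\<rceil>..\<lfloor>\<beta> * real k\<rfloor>})"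

definition reduced_fraction_pairs :: "real \<Rightarrow> real \<Rightarrow> nat \<Rightarrow> (nat \<times> int) set" where
  "reduced_fraction_pairs \<alpha> \<beta> K = {(k, a) \<in> fraction_pairs \<alpha> \<beta> K. coprime (int k) a}"

lemma mem_fraction_pairs:
  "(k, a) \<in> fraction_pairs \<alpha> \<beta> K \<longleftrightarrow>
     1 \<le> k \<and> k \<le> K \<and> \<alpha> * real k \<le> of_int a \<and> of_int a \<le> \<beta> * real k"
  by (auto simp: fraction_pairs_def ceiling_le_iff le_floor_iff)

lemma mem_reduced_fraction_pairs:
  "(k, a) \<in> reduced_fraction_pairs \<alpha> \<beta> K \<longleftrightarrow>
     (k, a) \<in> fraction_pairs \<alpha> \<beta> K \<and> coprime (int k) a"
  by (simp add: reduced_fraction_pairs_def)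

lemma finite_fraction_pairs: "finite (fraction_pairs \<alpha> \<beta> K)"
  by (auto simp: fraction_pairs_def)

lemma finite_reduced_fraction_pairs: "finite (reduced_fraction_pairs \<alpha> \<beta> K)"
  by (rule finite_subset[OF _ finite_fraction_pairs]) (auto simp: reduced_fraction_pairs_def)

lemma card_fraction_pairs:
  "card (fraction_pairs \<alpha> \<beta> K) = (\<Sum>k\<in>{1..K}. card {\<lceil>\<alpha> * real k\<rceil>..\<lfloor>\<beta> * real k\<rfloor>})"
  by (simp add: fraction_pairs_def card_SigmaI)

lemma card_fraction_pairs_ge:
  "(\<beta> - \<alpha>) * (real K * (real K + 1) / 2) - real K \<le> real (card (fraction_pairs \<alpha> \<beta> K))"
proof -
  have "(\<Sum>k\<in>{1..K}. (\<beta> - \<alpha>) * real k - 1) \<le> (\<Sum>k\<in>{1..K}. real (card {\<lceil>\<alpha> * real k\<rceil>..\<lfloor>\<beta> * real k\<rfloor>}))"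
  proof (rule sum_mono)
    fix k
    show "(\<beta> - \<alpha>) * real k - 1 \<le> real (card {\<lceil>\<alpha> * real k\<rceil>..\<lfloor>\<beta> * real k\<rfloor>})"
      using card_integers_between_ge[where u = "\<alpha> * real k" and v = "\<beta> * real k"]
      by (simp add: algebra_simps)
  qed
  moreover have "sum real {Suc 0..K} = real K * (real K + 1) / 2"
    using double_gauss_sum_from_Suc_0[where 'a = real, of K] by simp
  ultimately show ?thesis
    by (simp add: card_fraction_pairs sum_subtractf sum_distrib_left[symmetric])
qed

lemma card_fraction_pairs_le:
  assumes "\<alpha> \<le> \<beta>"
  shows "real (card (fraction_pairs \<alpha> \<beta> K)) \<le> (\<beta> - \<alpha>) * (real K * (real K + 1) / 2) + real K"
proof -
  have "(\<Sum>k\<in>{1..K}. real (card {\<lceil>\<alpha> * real k\<rceil>..\<lfloor>\<beta> * real k\<rfloor>})) \<le> (\<Sum>k\<in>{1..K}. (\<beta> - \<alpha>) * real k + 1)"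
  proof (rule sum_mono)
    fix k
    have "\<alpha> * real k \<le> \<beta> * real k" using assms by (simp add: mult_right_mono)
    then show "real (card {\<lceil>\<alpha> * real k\<rceil>..\<lfloor>\<beta> * real k\<rfloor>}) \<le> (\<beta> - \<alpha>) * real k + 1"
      using card_integers_between_le[where u = "\<alpha> * real k" and v = "\<beta> * real k"]
      by (simp add: algebra_simps)
  qed
  moreover have "sum real {Suc 0..K} = real K * (real K + 1) / 2"
    using double_gauss_sum_from_Suc_0[where 'a = real, of K] by simp
  ultimately show ?thesis
    by (simp add: card_fraction_pairs sum.distrib sum_distrib_left[symmetric])
qed

lemma nonreduced_fraction_pairs_subset:
  "fraction_pairs \<alpha> \<beta> K - reduced_fraction_pairs \<alpha> \<beta> K
     \<subseteq> (\<lambda>(m, k, a). (m * k, int m * a)) ` (SIGMA m:{2..K}. fraction_pairs \<alpha> \<beta> (K div m))"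
proof (clarify)
  fix k a assume "(k, a) \<in> fraction_pairs \<alpha> \<beta> K" "(k, a) \<notin> reduced_fraction_pairs \<alpha> \<beta> K"
  then have k: "1 \<le> k" "k \<le> K" and a: "\<alpha> * real k \<le> of_int a" "of_int a \<le> \<beta> * real k"
    and not_coprime: "\<not> coprime (int k) a"
    by (auto simp: mem_fraction_pairs mem_reduced_fraction_pairs)
  define m where "m = nat (gcd (int k) a)"
  have gcd_eq: "int m = gcd (int k) a" unfolding m_def by simp
  have "gcd (int k) a \<noteq> 1" using not_coprime by (simp add: coprime_iff_gcd_eq_1)
  moreover have "gcd (int k) a > 0" using k by simp
  ultimately have m2: "m \<ge> 2" unfolding m_def by linarith
  have "int m dvd int k" "int m dvd a" unfolding gcd_eq by simp_all
  then obtain k' a' where k_eq: "k = m * k'" and a_eq: "a = int m * a'"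
    by (metis dvdE of_nat_dvd_iff)
  have k': "1 \<le> k'" using k k_eq by (cases k') auto
  have "m \<le> K" using k k_eq k' by (metis le_trans mult.right_neutral mult_le_mono2)
  moreover have "k' \<le> K div m"
    using div_le_mono[OF k(2), of m] m2 unfolding k_eq by simp
  moreover have "\<alpha> * real k' \<le> of_int a'" "of_int a' \<le> \<beta> * real k'"
    using a m2 unfolding k_eq a_eq by (auto simp: algebra_simps mult_le_cancel_left)
  ultimately have "(m, k', a') \<in> (SIGMA m:{2..K}. fraction_pairs \<alpha> \<beta> (K div m))"
    using m2 k' by (simp add: mem_fraction_pairs)
  then show "(k, a) \<in> (\<lambda>(m, k, a). (m * k, int m * a)) ` (SIGMA m:{2..K}. fraction_pairs \<alpha> \<beta> (K div m))"
    unfolding k_eq a_eq by force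
qed

(* A non-reduced pair is m times a pair with denominator at most K div m, for some m >= 2;
   since the sum of 1 / m^2 over m >= 2 is at most 3/4, these are at most about three
   quarters of all pairs. *)
lemma card_nonreduced_fraction_pairs_le:
  assumes "\<alpha> \<le> \<beta>"
  shows "real (card (fraction_pairs \<alpha> \<beta> K - reduced_fraction_pairs \<alpha> \<beta> K))
    \<le> 3 / 8 * (\<beta> - \<alpha>) * (real K)\<^sup>2 + ((\<beta> - \<alpha>) / 2 + 1) * real K * (2 * sqrt (real K))"
proof -
  define L where "L = \<beta> - \<alpha>"
  have L: "L \<ge> 0" unfolding L_def using assms by simp
  have each: "real (card (fraction_pairs \<alpha> \<beta> (K div m)))
      \<le> L * (real K)\<^sup>2 / 2 * (1 / (real m)\<^sup>2) + (L * real K / 2 + real K) * (1 / real m)"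
    if m: "m \<in> {2..K}" for m
  proof -
    have m_pos: "real m > 0" using m by simp
    have div_le: "real (K div m) \<le> real K / real m" by (rule of_nat_div_le_of_nat)
    have "real (card (fraction_pairs \<alpha> \<beta> (K div m)))
        \<le> L * (real (K div m) * (real (K div m) + 1) / 2) + real (K div m)"
      unfolding L_def by (rule card_fraction_pairs_le[OF assms])
    also have "\<dots> \<le> L * ((real K / real m) * (real K / real m + 1) / 2) + real K / real m"
      using div_le L by (intro add_mono mult_left_mono divide_right_mono mult_mono) auto
    also have "\<dots> = L * (real K)\<^sup>2 / 2 * (1 / (real m)\<^sup>2) + (L * real K / 2 + real K) * (1 / real m)"
      using m_pos by (simp add: field_simps power2_eq_square)
    finally show ?thesis .
  qed
  have "card (fraction_pairs \<alpha> \<beta> K - reduced_fraction_pairs \<alpha> \<beta> K)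
      \<le> card (SIGMA m:{2..K}. fraction_pairs \<alpha> \<beta> (K div m))"
    by (rule surj_card_le[OF _ nonreduced_fraction_pairs_subset]) (simp add: finite_fraction_pairs)
  also have "\<dots> = (\<Sum>m\<in>{2..K}. card (fraction_pairs \<alpha> \<beta> (K div m)))"
    by (simp add: card_SigmaI finite_fraction_pairs)
  finally have "real (card (fraction_pairs \<alpha> \<beta> K - reduced_fraction_pairs \<alpha> \<beta> K))
      \<le> (\<Sum>m\<in>{2..K}. real (card (fraction_pairs \<alpha> \<beta> (K div m))))"
    by (metis of_nat_le_iff of_nat_sum)
  also have "\<dots> \<le> (\<Sum>m\<in>{2..K}. L * (real K)\<^sup>2 / 2 * (1 / (real m)\<^sup>2)
                              + (L * real K / 2 + real K) * (1 / real m))"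
    using each by (rule sum_mono)
  also have "\<dots> = L * (real K)\<^sup>2 / 2 * (\<Sum>m\<in>{2..K}. 1 / (real m)\<^sup>2)
                 + (L * real K / 2 + real K) * (\<Sum>m\<in>{2..K}. 1 / real m)"
    by (simp add: sum.distrib sum_distrib_left)
  also have "\<dots> \<le> L * (real K)\<^sup>2 / 2 * (3 / 4) + (L * real K / 2 + real K) * (2 * sqrt (real K))"
  proof (intro add_mono mult_left_mono)
    have "(\<Sum>m\<in>{2..K}. 1 / real m) \<le> (\<Sum>m\<in>{1..K}. 1 / real m)"
      by (intro sum_mono2) auto
    then show "(\<Sum>m\<in>{2..K}. 1 / real m) \<le> 2 * sqrt (real K)"
      using sum_inverse_le_two_sqrt[of K] by linarith
  qed (use L sum_inverse_squares_from_2_le in auto)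
  finally show ?thesis unfolding L_def by (simp add: field_simps)
qed

lemma card_reduced_fraction_pairs_ge:
  assumes L: "\<beta> - \<alpha> > 0" and K: "real K \<ge> (32 * ((\<beta> - \<alpha>) + 2) / (\<beta> - \<alpha>))\<^sup>2"
  shows "(\<beta> - \<alpha>) * (real K)\<^sup>2 / 16 \<le> real (card (reduced_fraction_pairs \<alpha> \<beta> K))"
proof -
  define L where "L = \<beta> - \<alpha>"
  define s where "s = sqrt (real K)"
  have L_pos: "L > 0" using L unfolding L_def .
  have bound_le_s: "32 * (L + 2) / L \<le> s"
    using real_le_rsqrt[OF K] unfolding s_def L_def .
  then have Ls: "32 * (L + 2) \<le> L * s" using L_pos by (simp add: field_simps)
  have "32 \<le> 32 * (L + 2) / L" using L_pos by (simp add: field_simps)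
  then have s: "32 \<le> s" using bound_le_s by linarith
  have "2 * 32 \<le> (L + 2) * s" using L_pos s by (intro mult_mono) auto
  then have "1 + (L + 2) * s \<le> 2 * (L + 2) * s" by linarith
  also have "\<dots> \<le> (L * s / 16) * s" using Ls s by (intro mult_right_mono) auto
  also have "\<dots> = L * real K / 16" unfolding s_def by (simp add: power2_eq_square)
  finally have "real K * (1 + (L + 2) * s) \<le> real K * (L * real K / 16)"
    by (intro mult_left_mono) auto
  then have main: "L * (real K)\<^sup>2 / 16 \<le> L * (real K)\<^sup>2 / 2 - real K
      - (3 / 8 * L * (real K)\<^sup>2 + (L / 2 + 1) * real K * (2 * s))"
    by (simp add: algebra_simps power2_eq_square)
  have sub: "reduced_fraction_pairs \<alpha> \<beta> K \<subseteq> fraction_pairs \<alpha> \<beta> K"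
    by (auto simp: reduced_fraction_pairs_def)
  have "card (fraction_pairs \<alpha> \<beta> K) = card (reduced_fraction_pairs \<alpha> \<beta> K)
      + card (fraction_pairs \<alpha> \<beta> K - reduced_fraction_pairs \<alpha> \<beta> K)"
    using card_Diff_subset[OF finite_subset[OF sub finite_fraction_pairs] sub]
      card_mono[OF finite_fraction_pairs sub] by simp
  moreover have "L * (real K)\<^sup>2 / 2 - real K \<le> real (card (fraction_pairs \<alpha> \<beta> K))"
  proof -
    have "L * (real K)\<^sup>2 / 2 \<le> L * (real K * (real K + 1) / 2)"
      using L_pos by (simp add: power2_eq_square field_simps)
    then show ?thesis using card_fraction_pairs_ge[of \<beta> \<alpha> K] unfolding L_def by linarith
  qed
  moreover have "real (card (fraction_pairs \<alpha> \<beta> K - reduced_fraction_pairs \<alpha> \<beta> K))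
      \<le> 3 / 8 * L * (real K)\<^sup>2 + (L / 2 + 1) * real K * (2 * s)"
    using card_nonreduced_fraction_pairs_le[of \<alpha> \<beta> K] L_pos unfolding L_def s_def by simp
  ultimately show ?thesis
    using main unfolding L_def by linarith
qed

section \<open>Grid cells near rational points\<close>

lemma card_cells_in_disjoint_intervals_ge:
  fixes u v :: "'a \<Rightarrow> real"
  assumes P: "finite P"
    and disjoint: "\<And>p q. p \<in> P \<Longrightarrow> q \<in> P \<Longrightarrow> p \<noteq> q \<Longrightarrow> v p \<le> u q \<or> v q \<le> u p"
    and long: "\<And>p. p \<in> P \<Longrightarrow> 0 \<le> u p \<and> u p + real S + 1 \<le> v p"
  shows "card P * S \<le> card {c::nat. \<exists>p\<in>P. u p \<le> real c \<and> real c + 1 \<le> v p}"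
proof -
  define cells where "cells = {c::nat. \<exists>p\<in>P. u p \<le> real c \<and> real c + 1 \<le> v p}"
  define f where "f = (\<lambda>(p, s). nat \<lceil>u p\<rceil> + s)"
  have f_in: "u p \<le> real (f (p, s)) \<and> real (f (p, s)) + 1 \<le> v p" if "p \<in> P" "s < S" for p s
  proof -
    have "real (f (p, s)) = of_int \<lceil>u p\<rceil> + real s"
      using long[OF that(1)] unfolding f_def by simp
    moreover have "real s + 1 \<le> real S" using that(2) by simp
    ultimately show ?thesis
      using long[OF that(1)] le_of_int_ceiling[of "u p"] of_int_ceiling_le_add_one[of "u p"]
      by linarith
  qed
  have "inj_on f (P \<times> {..<S})"
  proof (rule inj_onI, clarify)
    fix p s q t assume pq: "p \<in> P" "s < S" "q \<in> P" "t < S" "f (p, s) = f (q, t)"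
    have "p = q"
      using disjoint[of p q] f_in[of p s] f_in[of q t] pq by fastforce
    then show "p = q \<and> s = t" using pq(5) unfolding f_def by simp
  qed
  moreover have "f ` (P \<times> {..<S}) \<subseteq> cells" using f_in unfolding cells_def by fastforce
  moreover have "finite cells"
  proof (rule finite_subset)
    show "cells \<subseteq> (\<Union>p\<in>P. {..nat \<lfloor>v p\<rfloor>})"
      unfolding cells_def by (auto simp: le_nat_floor)
  qed (use P in simp)
  ultimately have "card (P \<times> {..<S}) \<le> card cells"
    by (metis card_image card_mono)
  then show ?thesis using P unfolding cells_def by (simp add: card_cartesian_product)
qed

lemma card_grid_cells_in_disjoint_intervals_ge:
  fixes u v :: "'a \<Rightarrow> real" and G :: nat
  assumes P: "finite P" and G: "G > 0"
    and disjoint: "\<And>p q. p \<in> P \<Longrightarrow> q \<in> P \<Longrightarrow> p \<noteq> q \<Longrightarrow> v p \<le> u q \<or> v q \<le> u p"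
    and long: "\<And>p. p \<in> P \<Longrightarrow> 0 \<le> u p \<and> u p + (real S + 1) / real G \<le> v p"
  shows "card P * S \<le> card {c::nat. \<exists>p\<in>P. u p \<le> real c / real G \<and> (real c + 1) / real G \<le> v p}"
proof -
  have "card P * S \<le> card {c::nat. \<exists>p\<in>P. real G * u p \<le> real c \<and> real c + 1 \<le> real G * v p}"
  proof (rule card_cells_in_disjoint_intervals_ge[OF P])
    show "real G * v p \<le> real G * u q \<or> real G * v q \<le> real G * u p" if "p \<in> P" "q \<in> P" "p \<noteq> q" for p q
      using disjoint[OF that] G by simp
    show "0 \<le> real G * u p \<and> real G * u p + real S + 1 \<le> real G * v p" if "p \<in> P" for p
      using long[OF that] G by (simp add: field_simps)
  qed
  also have "{c::nat. \<exists>p\<in>P. real G * u p \<le> real c \<and> real c + 1 \<le> real G * v p}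
      = {c::nat. \<exists>p\<in>P. u p \<le> real c / real G \<and> (real c + 1) / real G \<le> v p}"
    using G by (simp add: field_simps mult.commute)
  finally show ?thesis .
qed

lemma reduced_fractions_dist_ge:
  fixes k k' :: nat and a a' :: int
  assumes cop: "coprime (int k) a" "coprime (int k') a'" and pos: "k > 0" "k' > 0"
    and ne: "(k, a) \<noteq> (k', a')"
  shows "1 / (real k * real k') \<le> \<bar>of_int a / real k - of_int a' / real k'\<bar>"
proof -
  have "a * int k' - a' * int k \<noteq> 0"
  proof
    assume "a * int k' - a' * int k = 0"
    then have eq: "a * int k' = a' * int k" by simp
    have "int k dvd a * int k'" by (simp add: eq)
    then have "int k dvd int k'" using cop(1) coprime_dvd_mult_right_iff by blast
    have "int k' dvd a' * int k" by (simp add: eq[symmetric])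
    then have "int k' dvd int k" using cop(2) coprime_dvd_mult_right_iff by blast
    with \<open>int k dvd int k'\<close> have "k = k'" by (simp add: dvd_antisym)
    moreover from this have "a = a'" using eq pos by simp
    ultimately show False using ne by simp
  qed
  then have "1 \<le> \<bar>a * int k' - a' * int k\<bar>" by linarith
  then have one_le: "1 \<le> \<bar>real_of_int (a * int k' - a' * int k)\<bar>"
    by (metis of_int_1_le_iff of_int_abs)
  have kk': "real k * real k' > 0" using pos by simp
  have "1 / (real k * real k') \<le> \<bar>real_of_int (a * int k' - a' * int k)\<bar> / (real k * real k')"
    using divide_right_mono[OF one_le less_imp_le[OF kk']] .
  also have "\<dots> = \<bar>real_of_int (a * int k' - a' * int k) / (real k * real k')\<bar>"
    using kk' by (simp only: abs_divide abs_of_pos)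
  also have "real_of_int (a * int k' - a' * int k) / (real k * real k')
      = of_int a / real k - of_int a' / real k'"
    using pos by (simp add: field_simps)
  finally show ?thesis .
qed

lemma fraction_neighbourhoods_disjoint:
  fixes k k' n :: nat and a a' :: int
  assumes "coprime (int k) a" "coprime (int k') a'" "k \<in> {1..K}" "k' \<in> {1..K}"
    and "(k, a) \<noteq> (k', a')" and n: "n > 0" and r: "r \<ge> 0" "2 * real K * r \<le> 1"
  shows "(of_int a + r) / (real n * real k) \<le> (of_int a' - r) / (real n * real k')
       \<or> (of_int a' + r) / (real n * real k') \<le> (of_int a - r) / (real n * real k)"
proof -
  have k: "real k \<ge> 1" "real k \<le> real K" and k': "real k' \<ge> 1" "real k' \<le> real K"
    using assms(3,4) by auto
  have "r / real k + r / real k' = r * (real k + real k') / (real k * real k')"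
    using k k' by (simp add: field_simps)
  also have "\<dots> \<le> 1 / (real k * real k')"
  proof (rule divide_right_mono)
    have "r * (real k + real k') \<le> r * (2 * real K)"
      using k k' r by (intro mult_left_mono) auto
    then show "r * (real k + real k') \<le> 1" using r by (simp add: algebra_simps)
  qed (use k k' in simp)
  also have "\<dots> \<le> \<bar>of_int a / real k - of_int a' / real k'\<bar>"
    using assms(1,2,5) k k' by (intro reduced_fractions_dist_ge) auto
  finally have "of_int a / real k + r / real k \<le> of_int a' / real k' - r / real k'
      \<or> of_int a' / real k' + r / real k' \<le> of_int a / real k - r / real k"
    by linarith
  moreover have "(of_int a + r) / (real n * real k) = (of_int a / real k + r / real k) / real n"
    "(of_int a - r) / (real n * real k) = (of_int a / real k - r / real k) / real n"
    "(of_int a' + r) / (real n * real k') = (of_int a' / real k' + r / real k') / real n"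
    "(of_int a' - r) / (real n * real k') = (of_int a' / real k' - r / real k') / real n"
    using k k' n by (simp_all add: field_simps)
  moreover note divide_right_mono[OF _ of_nat_0_le_iff[of n]]
  ultimately show ?thesis by metis
qed

lemma card_reduced_fraction_pairs_block_ge:
  fixes n G i K :: nat
  assumes n: "n \<ge> 1" and G: "G \<ge> 1" and r: "0 \<le> r" "r \<le> 1 / (4 * real G)"
    and K: "(32 * (1 + 4 * real G))\<^sup>2 \<le> real K"
  shows "real n * (real K)\<^sup>2 / (32 * real G)
    \<le> real (card (reduced_fraction_pairs (real n * real i / real G + r) (real n * (real i + 1) / real G - r) K))"
proof -
  define L where "L = real n / real G - 2 * r"
  have L_eq: "(real n * (real i + 1) / real G - r) - (real n * real i / real G + r) = L"
    unfolding L_def using G by (simp add: field_simps)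
  have "2 * r \<le> 1 / (2 * real G)" using r(2) by simp
  also have "\<dots> \<le> real n / (2 * real G)" using n by (intro divide_right_mono) auto
  finally have "2 * r \<le> real n / (2 * real G)" .
  moreover have "real n / real G - real n / (2 * real G) = real n / (2 * real G)"
    using G by (simp add: field_simps)
  ultimately have L_ge: "real n / (2 * real G) \<le> L"
    unfolding L_def by linarith
  moreover have "real n / (2 * real G) > 0" using n G by simp
  ultimately have L_pos: "L > 0" by linarith
  have "32 * (L + 2) / L = 32 + 64 / L" using L_pos by (simp add: field_simps)
  also have "\<dots> \<le> 32 + 64 / (real n / (2 * real G))"
    using L_ge L_pos n G by (intro add_left_mono divide_left_mono) (auto intro: mult_pos_pos)
  also have "\<dots> \<le> 32 * (1 + 4 * real G)"
    using n G by (simp add: field_simps)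
  finally have "(32 * (L + 2) / L)\<^sup>2 \<le> (32 * (1 + 4 * real G))\<^sup>2"
    using L_pos by (intro power_mono) auto
  then have "(32 * (L + 2) / L)\<^sup>2 \<le> real K" using K by linarith
  then have "L * (real K)\<^sup>2 / 16
      \<le> real (card (reduced_fraction_pairs (real n * real i / real G + r) (real n * (real i + 1) / real G - r) K))"
    using card_reduced_fraction_pairs_ge[where \<alpha> = "real n * real i / real G + r"
        and \<beta> = "real n * (real i + 1) / real G - r" and K = K] L_pos
    unfolding L_eq by blast
  moreover have "real n * (real K)\<^sup>2 / (32 * real G) \<le> L * (real K)\<^sup>2 / 16"
  proof -
    have "real n / (2 * real G) * (real K)\<^sup>2 / 16 \<le> L * (real K)\<^sup>2 / 16"
      using L_ge by (intro divide_right_mono mult_right_mono) auto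
    then show ?thesis by (simp add: field_simps)
  qed
  ultimately show ?thesis by linarith
qed

lemma fraction_neighbourhood_in_block:
  fixes n G i k :: nat and a :: int
  assumes "(k, a) \<in> fraction_pairs (real n * real i / real G + r) (real n * (real i + 1) / real G - r) K"
    and n: "n \<ge> 1" and G: "G \<ge> 1" and r: "r \<ge> 0"
  shows "real i / real G \<le> (of_int a - r) / (real n * real k)"
    and "(of_int a + r) / (real n * real k) \<le> (real i + 1) / real G"
proof -
  have k: "real k \<ge> 1"
    and lo: "(real n * real i / real G + r) * real k \<le> of_int a"
    and hi: "of_int a \<le> (real n * (real i + 1) / real G - r) * real k"
    using assms(1) by (auto simp: mem_fraction_pairs)
  have pos: "real n > 0" "real k > 0" "real G > 0" using n k G by auto
  have rho: "r / (real n * real k) \<le> r / real n"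
    using r k pos by (intro divide_left_mono) auto
  have "real i / real G + r / real n = (real n * real i / real G + r) * real k / (real n * real k)"
    using pos by (simp add: field_simps)
  also have "\<dots> \<le> of_int a / (real n * real k)"
    by (rule divide_right_mono[OF lo]) (use pos in simp)
  finally show "real i / real G \<le> (of_int a - r) / (real n * real k)"
    using rho by (simp add: diff_divide_distrib)
  have "of_int a / (real n * real k) \<le> (real n * (real i + 1) / real G - r) * real k / (real n * real k)"
    by (rule divide_right_mono[OF hi]) (use pos in simp)
  also have "\<dots> = (real i + 1) / real G - r / real n"
    using pos by (simp add: field_simps)
  finally show "(of_int a + r) / (real n * real k) \<le> (real i + 1) / real G"
    using rho by (simp add: add_divide_distrib)
qed

definition cell_near_fraction :: "nat \<Rightarrow> nat \<Rightarrow> real \<Rightarrow> nat \<Rightarrow> nat \<Rightarrow> bool" where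
  "cell_near_fraction n K r G c \<longleftrightarrow> (\<exists>k\<in>{1..K}. \<exists>a::int.
     (of_int a - r) / (real n * real k) \<le> real c / real G \<and>
     (real c + 1) / real G \<le> (of_int a + r) / (real n * real k))"

lemma cell_near_fraction_imp_close:
  assumes "cell_near_fraction n K r G c" and n: "n \<ge> 1"
    and x: "real c / real G \<le> x" "x \<le> (real c + 1) / real G"
  shows "\<exists>k\<in>{1..K}. \<exists>a::int. \<bar>real n * real k * x - of_int a\<bar> \<le> r"
proof -
  obtain k a where k: "k \<in> {1..K}"
    and lo: "(of_int a - r) / (real n * real k) \<le> real c / real G"
    and hi: "(real c + 1) / real G \<le> (of_int a + r) / (real n * real k)"
    using assms(1) unfolding cell_near_fraction_def by blast
  have nk: "real n * real k > 0" using n k by auto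
  have "(of_int a - r) / (real n * real k) \<le> x" "x \<le> (of_int a + r) / (real n * real k)"
    using lo hi x by linarith+
  then have "of_int a - r \<le> real n * real k * x" "real n * real k * x \<le> of_int a + r"
    using nk by (simp_all add: pos_divide_le_eq pos_le_divide_eq mult.commute)
  then show ?thesis using k by (intro bexI[of _ k] exI[of _ a]) auto
qed

lemma cell_in_fraction_neighbourhood:
  fixes n G M i k c :: nat and a :: int
  assumes ka: "(k, a) \<in> fraction_pairs (real n * real i / real G + r) (real n * (real i + 1) / real G - r) K"
    and n: "n \<ge> 1" and G: "G \<ge> 1" and M: "M > 0" and r: "r \<ge> 0"
    and lo: "(of_int a - r) / (real n * real k) \<le> real c / real (G * M)"
    and hi: "(real c + 1) / real (G * M) \<le> (of_int a + r) / (real n * real k)"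
  shows "c div M = i \<and> cell_near_fraction n K r (G * M) c"
proof
  have GM: "real (G * M) > 0" using G M by simp
  have "real i / real G \<le> real c / real (G * M)" "(real c + 1) / real (G * M) \<le> (real i + 1) / real G"
    using fraction_neighbourhood_in_block[OF ka n G r] lo hi by linarith+
  then have "real i / real G * real (G * M) \<le> real c" "real c + 1 \<le> (real i + 1) / real G * real (G * M)"
    by (simp_all only: pos_le_divide_eq[OF GM] pos_divide_le_eq[OF GM])
  moreover have "real i / real G * real (G * M) = real M * real i"
    "(real i + 1) / real G * real (G * M) = real M * (real i + 1)"
    using G by simp_all
  ultimately have "real M * real i \<le> real c" "real c + 1 \<le> real M * (real i + 1)"
    by simp_all
  then show "c div M = i"
    by (intro div_nat_eqI) (simp_all add: algebra_simps flip: of_nat_mult of_nat_add)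
  show "cell_near_fraction n K r (G * M) c"
    using ka lo hi unfolding cell_near_fraction_def by (auto simp: mem_fraction_pairs)
qed

lemma card_cells_near_fractions_in_block_ge:
  fixes n K G M i S :: nat
  assumes n: "n \<ge> 1" and G: "G \<ge> 1" and M: "M > 0" and r: "0 \<le> r" "2 * real K * r \<le> 1"
    and S: "(real S + 1) / real (G * M) \<le> 2 * r / (real n * real K)"
  shows "card (reduced_fraction_pairs (real n * real i / real G + r) (real n * (real i + 1) / real G - r) K) * S
    \<le> card {c. c div M = i \<and> cell_near_fraction n K r (G * M) c}"
proof -
  define P where "P = reduced_fraction_pairs (real n * real i / real G + r) (real n * (real i + 1) / real G - r) K"
  define u v where "u = (\<lambda>(k, a). (of_int a - r) / (real n * real k))"
    and "v = (\<lambda>(k, a). (of_int a + r) / (real n * real k))"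
  have P: "(k, a) \<in> fraction_pairs (real n * real i / real G + r) (real n * (real i + 1) / real G - r) K
      \<and> coprime (int k) a" if "(k, a) \<in> P" for k a
    using that unfolding P_def by (simp add: mem_reduced_fraction_pairs)
  have "card P * S \<le> card {c. \<exists>p\<in>P. u p \<le> real c / real (G * M) \<and> (real c + 1) / real (G * M) \<le> v p}"
  proof (rule card_grid_cells_in_disjoint_intervals_ge)
    show "finite P" unfolding P_def by (rule finite_reduced_fraction_pairs)
    show "G * M > 0" using G M by simp
    show "v p \<le> u q \<or> v q \<le> u p" if "p \<in> P" "q \<in> P" "p \<noteq> q" for p q
    proof -
      obtain k a k' a' where p: "p = (k, a)" and q: "q = (k', a')" by (cases p, cases q)
      show ?thesis
        using P[of k a] P[of k' a'] that n r unfolding u_def v_def p q prod.case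
        by (intro fraction_neighbourhoods_disjoint) (auto simp: mem_fraction_pairs)
    qed
    show "0 \<le> u p \<and> u p + (real S + 1) / real (G * M) \<le> v p" if "p \<in> P" for p
    proof (cases p)
      case (Pair k a)
      have ka: "(k, a) \<in> fraction_pairs (real n * real i / real G + r) (real n * (real i + 1) / real G - r) K"
        using that P unfolding Pair by blast
      then have k: "1 \<le> k" "k \<le> K" by (auto simp: mem_fraction_pairs)
      have "2 * r / (real n * real K) \<le> 2 * r / (real n * real k)"
        using k r n by (intro divide_left_mono) auto
      moreover have "v p - u p = 2 * r / (real n * real k)"
        unfolding u_def v_def Pair by (simp add: diff_divide_distrib add_divide_distrib)
      moreover have "0 \<le> real i / real G" by simp
      moreover have "real i / real G \<le> u p"
        using fraction_neighbourhood_in_block(1)[OF ka n G r(1)] unfolding u_def Pair by simp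
      ultimately show ?thesis using S by linarith
    qed
  qed
  also have "\<dots> \<le> card {c. c div M = i \<and> cell_near_fraction n K r (G * M) c}"
  proof (rule card_mono)
    have "{c. c div M = i \<and> cell_near_fraction n K r (G * M) c} \<subseteq> {..<Suc i * M}"
      using M by (auto simp: dividend_less_div_times)
    then show "finite {c. c div M = i \<and> cell_near_fraction n K r (G * M) c}"
      by (rule finite_subset) simp
    show "{c. \<exists>p\<in>P. u p \<le> real c / real (G * M) \<and> (real c + 1) / real (G * M) \<le> v p}
        \<subseteq> {c. c div M = i \<and> cell_near_fraction n K r (G * M) c}"
      using P cell_in_fraction_neighbourhood[OF _ n G M r(1)] unfolding u_def v_def by fast
  qed
  finally show ?thesis unfolding P_def .
qed

lemma cells_near_fractions_in_block_proportion:
  fixes n K G M i :: nat and h :: real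
  assumes hn: "1 \<le> h * real n" and G: "G \<ge> 1"
    and K: "4 * real G \<le> real K" "(32 * (1 + 4 * real G))\<^sup>2 \<le> real K"
    and M: "2 * h * (real n)\<^sup>2 * (real K)\<^sup>2 \<le> real M"
  shows "real M / (128 * h * real n)
    \<le> real (card {c. c div M = i \<and> cell_near_fraction n K (1 / (2 * h * real n * real K)) (G * M) c})"
proof -
  define r where "r = 1 / (2 * h * real n * real K)"
  define X where "X = real G * real M / (2 * h * (real n)\<^sup>2 * (real K)\<^sup>2)"
  define S where "S = nat \<lfloor>X\<rfloor>"
  have "0 < h * real n" using hn by linarith
  then have h: "h > 0" and n: "real n \<ge> 1" by (auto simp: zero_less_mult_iff)
  have K4: "real K \<ge> 4" using K G by simp
  have r: "r > 0" "2 * real K * r \<le> 1" "r \<le> 1 / (4 * real G)"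
  proof -
    show "r > 0" unfolding r_def using h n K4 by simp
    have "2 * real K * r = 1 / (h * real n)" unfolding r_def using h n K4 by (simp add: field_simps)
    also have "\<dots> \<le> 1" using hn by simp
    finally show "2 * real K * r \<le> 1" .
    then have "r \<le> 1 / (2 * real K)" using K4 by (simp add: field_simps)
    also have "\<dots> \<le> 1 / (4 * real G)" using K(1) G by (intro divide_left_mono) auto
    finally show "r \<le> 1 / (4 * real G)" .
  qed
  have d: "2 * h * (real n)\<^sup>2 * (real K)\<^sup>2 > 0" using h n K4 by simp
  then have "real M > 0" using M by linarith
  then have M_pos: "M > 0" by simp
  have "1 * (2 * h * (real n)\<^sup>2 * (real K)\<^sup>2) \<le> real G * real M"
    using G M h by (intro mult_mono) auto
  with d have X: "1 \<le> X" unfolding X_def by (simp add: le_divide_eq)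
  moreover from this have "real S = of_int \<lfloor>X\<rfloor>" "1 \<le> real S" unfolding S_def by simp_all
  ultimately have S: "X / 2 \<le> real S" "real S + 1 \<le> 2 * X"
    using of_int_floor_le[of X] real_of_int_floor_gt_diff_one[of X] by linarith+
  have "(real S + 1) / real (G * M) \<le> 2 * X / real (G * M)"
    using S(2) by (rule divide_right_mono) simp
  also have "\<dots> = 2 * r / (real n * real K)"
    unfolding X_def r_def using G M_pos h n K4 by (simp add: field_simps power2_eq_square)
  finally have "(real S + 1) / real (G * M) \<le> 2 * r / (real n * real K)" .
  then have "card (reduced_fraction_pairs (real n * real i / real G + r) (real n * (real i + 1) / real G - r) K) * S
      \<le> card {c. c div M = i \<and> cell_near_fraction n K r (G * M) c}"
    using n G M_pos r by (intro card_cells_near_fractions_in_block_ge) auto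
  then have "real (card (reduced_fraction_pairs (real n * real i / real G + r) (real n * (real i + 1) / real G - r) K))
      * real S \<le> real (card {c. c div M = i \<and> cell_near_fraction n K r (G * M) c})"
    by (simp flip: of_nat_mult)
  moreover have "real n * (real K)\<^sup>2 / (32 * real G) * (X / 2)
      \<le> real (card (reduced_fraction_pairs (real n * real i / real G + r) (real n * (real i + 1) / real G - r) K))
        * real S"
    using n G r K(2) S X by (intro mult_mono card_reduced_fraction_pairs_block_ge) auto
  moreover have "real M / (128 * h * real n) = real n * (real K)\<^sup>2 / (32 * real G) * (X / 2)"
    unfolding X_def using G h n K4 by (simp add: field_simps power2_eq_square)
  ultimately show ?thesis unfolding r_def by linarith
qed

section \<open>Nested grids\<close>

lemma prod_one_minus_le_exp_neg_sum:
  fixes a :: "nat \<Rightarrow> real"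
  assumes "\<And>n. n \<in> A \<Longrightarrow> 0 \<le> a n \<and> a n \<le> 1"
  shows "(\<Prod>n\<in>A. 1 - a n) \<le> exp (- (\<Sum>n\<in>A. a n))"
proof (cases "finite A")
  case True
  have "(\<Prod>n\<in>A. 1 - a n) \<le> (\<Prod>n\<in>A. exp (- a n))"
  proof (rule prod_mono)
    fix n assume "n \<in> A"
    then show "0 \<le> 1 - a n \<and> 1 - a n \<le> exp (- a n)"
      using assms[of n] exp_ge_add_one_self[of "- a n"] by simp
  qed
  also have "\<dots> = exp (- (\<Sum>n\<in>A. a n))"
    using True by (simp add: exp_sum[symmetric] sum_negf)
  finally show ?thesis .
qed simp

lemma not_summable_sum_unbounded:
  fixes f :: "nat \<Rightarrow> real"
  assumes nonneg: "\<And>n. 0 \<le> f n" and "\<not> summable f"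
  shows "\<exists>N. B \<le> (\<Sum>n\<in>{m..N}. f n)"
proof (rule ccontr)
  assume "\<not> ?thesis"
  then have bounded: "(\<Sum>n\<in>{m..N}. f n) < B" for N by (simp add: not_le)
  have "(\<Sum>n<N. f n) \<le> (\<Sum>n<m. f n) + B" for N
  proof -
    have "(\<Sum>n<N. f n) \<le> (\<Sum>n\<in>{..<m} \<union> {m..N}. f n)"
      using nonneg by (intro sum_mono2) auto
    also have "\<dots> = (\<Sum>n<m. f n) + (\<Sum>n\<in>{m..N}. f n)" by (rule sum.union_disjoint) auto
    finally show ?thesis using bounded[of N] by linarith
  qed
  then have "summable f" using nonneg by (intro summableI_nonneg_bounded) auto
  with assms(2) show False by contradiction
qed

(* Level n divides [0,1) into the Gs n cells [c / Gs n, (c + 1) / Gs n); the children of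
   the cell c of level n are the cells c' of level n + 1 with c' div Ms (n + 1) = c. *)
locale nested_grids =
  fixes Gs Ms :: "nat \<Rightarrow> nat" and good :: "nat \<Rightarrow> nat \<Rightarrow> bool" and q :: "nat \<Rightarrow> real"
  assumes Gs_0: "Gs 0 = 1"
    and Gs_Suc: "Gs (Suc n) = Gs n * Ms (Suc n)"
    and Ms_pos: "Ms n > 0"
    and q_bounds: "0 \<le> q n" "q n \<le> 1"
    and good_proportion: "i < Gs n \<Longrightarrow>
      q (Suc n) * real (Ms (Suc n)) \<le> real (card {c. c div Ms (Suc n) = i \<and> good (Suc n) c})"
    and q_not_summable: "\<not> summable q"
begin

definition cell :: "nat \<Rightarrow> real \<Rightarrow> nat" where
  "cell n x = nat \<lfloor>real (Gs n) * x\<rfloor>"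

lemma Gs_pos: "Gs n > 0"
  by (induction n) (auto simp: Gs_0 Gs_Suc Ms_pos)

lemma cell_less:
  assumes "0 \<le> x" "x < 1"
  shows "cell n x < Gs n"
proof -
  have "real (Gs n) * x < real (Gs n)" using assms Gs_pos[of n] by simp
  then show ?thesis using assms unfolding cell_def by (simp add: floor_less_iff nat_less_iff)
qed

lemma cell_Suc_div:
  assumes "0 \<le> x"
  shows "cell (Suc n) x div Ms (Suc n) = cell n x"
proof -
  have "\<lfloor>real (Gs (Suc n)) * x / real_of_int (int (Ms (Suc n)))\<rfloor>
      = \<lfloor>real (Gs (Suc n)) * x\<rfloor> div int (Ms (Suc n))"
    by (rule floor_divide_real_eq_div) simp
  moreover have "real (Gs (Suc n)) * x / real_of_int (int (Ms (Suc n))) = real (Gs n) * x"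
    using Ms_pos[of "Suc n"] by (simp add: Gs_Suc)
  ultimately show ?thesis
    using assms unfolding cell_def by (simp add: nat_div_distrib)
qed

fun good_free_cells :: "nat \<Rightarrow> nat \<Rightarrow> nat set" where
  "good_free_cells m 0 = {0}"
| "good_free_cells m (Suc N) = {c. c < Gs (Suc N) \<and> c div Ms (Suc N) \<in> good_free_cells m N \<and>
      (m \<le> Suc N \<longrightarrow> \<not> good (Suc N) c)}"

lemma good_free_cells_subset: "good_free_cells m N \<subseteq> {..<Gs N}"
  by (cases N) (auto simp: Gs_0)

lemma finite_good_free_cells: "finite (good_free_cells m N)"
  using good_free_cells_subset finite_subset by blast

lemma cell_in_good_free_cells:
  assumes "0 \<le> x" "x < 1" and "\<And>n. m \<le> n \<Longrightarrow> n \<le> N \<Longrightarrow> \<not> good n (cell n x)"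
  shows "cell N x \<in> good_free_cells m N"
  using assms(3)
proof (induction N)
  case 0
  have "\<lfloor>x\<rfloor> = 0" using assms(1,2) by (simp add: floor_eq_iff)
  then show ?case by (simp add: cell_def Gs_0)
next
  case (Suc N)
  then show ?case using cell_less[OF assms(1,2)] cell_Suc_div[OF assms(1)] by simp
qed

lemma card_good_free_cells_Suc_le:
  "real (card (good_free_cells m (Suc N)))
     \<le> (if m \<le> Suc N then 1 - q (Suc N) else 1) * real (Ms (Suc N)) * real (card (good_free_cells m N))"
proof -
  define M where "M = Ms (Suc N)"
  define D where "D = good_free_cells m N"
  define children where "children c = {c'. c' div M = c \<and> (m \<le> Suc N \<longrightarrow> \<not> good (Suc N) c')}" for c
  have M: "M > 0" unfolding M_def by (rule Ms_pos)
  have block: "{c'. c' div M = c} = {M * c..<M * c + M}" for c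
    using M dividend_less_times_div[OF M] by (auto intro: div_nat_eqI simp: add.commute)
  have children_le: "real (card (children c)) \<le> (if m \<le> Suc N then 1 - q (Suc N) else 1) * real M"
    if "c \<in> D" for c
  proof (cases "m \<le> Suc N")
    case True
    define good_children where "good_children = {c'. c' div M = c \<and> good (Suc N) c'}"
    have "children c = {c'. c' div M = c} - good_children"
      unfolding children_def good_children_def using True by auto
    moreover have "good_children \<subseteq> {c'. c' div M = c}" unfolding good_children_def by auto
    moreover have "c < Gs N" using that good_free_cells_subset unfolding D_def by auto
    then have "q (Suc N) * real M \<le> real (card good_children)"
      unfolding good_children_def M_def by (rule good_proportion)
    ultimately show ?thesis
      using True card_Diff_subset[of good_children] card_mono[of "{c'. c' div M = c}" good_children]
      unfolding block by (simp add: of_nat_diff finite_subset algebra_simps)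
  next
    case False
    then have "children c = {c'. c' div M = c}" unfolding children_def by auto
    then show ?thesis using False unfolding block by simp
  qed
  have "good_free_cells m (Suc N) \<subseteq> (\<Union>c\<in>D. children c)"
    unfolding D_def children_def M_def by auto
  then have "card (good_free_cells m (Suc N)) \<le> card (\<Union>c\<in>D. children c)"
    by (rule card_mono[rotated]) (auto simp: D_def finite_good_free_cells children_def block
        intro: finite_subset[of _ "{M * _..<M * _ + M}"])
  also have "\<dots> \<le> (\<Sum>c\<in>D. card (children c))"
    by (rule card_UN_le) (simp add: D_def finite_good_free_cells)
  finally have "real (card (good_free_cells m (Suc N))) \<le> (\<Sum>c\<in>D. real (card (children c)))"
    by (metis of_nat_le_iff of_nat_sum)
  also have "\<dots> \<le> (\<Sum>c\<in>D. (if m \<le> Suc N then 1 - q (Suc N) else 1) * real M)"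
    using children_le by (rule sum_mono)
  finally show ?thesis unfolding M_def D_def by (simp add: mult.commute)
qed

lemma card_good_free_cells_le:
  assumes "1 \<le> m"
  shows "real (card (good_free_cells m N)) \<le> real (Gs N) * (\<Prod>n\<in>{m..N}. 1 - q n)"
proof (induction N)
  case 0
  then show ?case using assms by (simp add: Gs_0)
next
  case (Suc N)
  have "real (card (good_free_cells m (Suc N)))
      \<le> (if m \<le> Suc N then 1 - q (Suc N) else 1) * real (Ms (Suc N)) * real (card (good_free_cells m N))"
    by (rule card_good_free_cells_Suc_le)
  also have "\<dots> \<le> (if m \<le> Suc N then 1 - q (Suc N) else 1) * real (Ms (Suc N))
                   * (real (Gs N) * (\<Prod>n\<in>{m..N}. 1 - q n))"
    using Suc.IH q_bounds by (intro mult_left_mono) auto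
  also have "\<dots> = real (Gs (Suc N)) * (\<Prod>n\<in>{m..Suc N}. 1 - q n)"
    by (simp add: Gs_Suc prod.cl_ivl_Suc not_less)
  finally show ?case .
qed

definition good_free_set :: "nat \<Rightarrow> nat \<Rightarrow> real set" where
  "good_free_set m N = (\<Union>c\<in>good_free_cells m N. {real c / real (Gs N) ..< (real c + 1) / real (Gs N)})"

lemma good_free_set_sets: "good_free_set m N \<in> sets lborel"
  unfolding good_free_set_def using finite_good_free_cells by (intro sets.finite_UN) auto

lemma emeasure_good_free_set_le:
  "emeasure lborel (good_free_set m N) \<le> ennreal (real (card (good_free_cells m N)) / real (Gs N))"
proof -
  have G: "real (Gs N) > 0" using Gs_pos by simp
  have "emeasure lborel (good_free_set m N)
      \<le> (\<Sum>c\<in>good_free_cells m N. emeasure lborel {real c / real (Gs N) ..< (real c + 1) / real (Gs N)})"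
    unfolding good_free_set_def using finite_good_free_cells by (intro emeasure_subadditive_finite) auto
  also have "\<dots> = (\<Sum>c\<in>good_free_cells m N. ennreal (1 / real (Gs N)))"
    using G by (intro sum.cong) (simp_all add: divide_right_mono diff_divide_distrib[symmetric])
  also have "\<dots> = ennreal (real (card (good_free_cells m N)) / real (Gs N))"
    using G by (subst sum_ennreal) auto
  finally show ?thesis .
qed

lemma mem_good_free_set:
  assumes "0 \<le> x" "x < 1" and "\<And>n. m \<le> n \<Longrightarrow> n \<le> N \<Longrightarrow> \<not> good n (cell n x)"
  shows "x \<in> good_free_set m N"
proof -
  have G: "real (Gs N) > 0" using Gs_pos by simp
  have "real (cell N x) = of_int \<lfloor>real (Gs N) * x\<rfloor>" unfolding cell_def using assms(1) G by simp
  then have "real (cell N x) \<le> real (Gs N) * x" "real (Gs N) * x < real (cell N x) + 1"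
    by linarith+
  then have "x \<in> {real (cell N x) / real (Gs N) ..< (real (cell N x) + 1) / real (Gs N)}"
    using G by (simp add: field_simps)
  then show ?thesis
    unfolding good_free_set_def using cell_in_good_free_cells[OF assms] by blast
qed

lemma good_free_null:
  assumes "1 \<le> m"
  shows "(\<Inter>N. good_free_set m N) \<in> null_sets lborel"
proof -
  have small: "emeasure lborel (\<Inter>N. good_free_set m N) \<le> ennreal e" if e: "e > 0" for e
  proof -
    obtain N where N: "- ln e \<le> (\<Sum>n\<in>{m..N}. q n)"
      using not_summable_sum_unbounded[OF q_bounds(1) q_not_summable] by blast
    have "real (card (good_free_cells m N)) / real (Gs N) \<le> (\<Prod>n\<in>{m..N}. 1 - q n)"
      using card_good_free_cells_le[OF assms, of N] Gs_pos[of N] by (simp add: field_simps)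
    also have "\<dots> \<le> exp (- (\<Sum>n\<in>{m..N}. q n))"
      using q_bounds by (intro prod_one_minus_le_exp_neg_sum) auto
    also have "\<dots> \<le> exp (ln e)" using N by simp
    also have "\<dots> = e" using e by simp
    finally have "real (card (good_free_cells m N)) / real (Gs N) \<le> e" .
    then have "emeasure lborel (good_free_set m N) \<le> ennreal e"
      using emeasure_good_free_set_le[of m N] by (meson ennreal_leI order_trans)
    moreover have "emeasure lborel (\<Inter>N. good_free_set m N) \<le> emeasure lborel (good_free_set m N)"
      using good_free_set_sets by (intro emeasure_mono) auto
    ultimately show ?thesis by (rule order_trans[rotated])
  qed
  have "emeasure lborel (\<Inter>N. good_free_set m N) \<le> 0"
    by (rule ennreal_le_epsilon) (simp add: small)
  then have "emeasure lborel (\<Inter>N. good_free_set m N) = 0" by simp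
  moreover have "(\<Inter>N. good_free_set m N) \<in> sets lborel"
    using good_free_set_sets by (intro sets.countable_INT) auto
  ultimately show ?thesis by (simp add: null_sets_def)
qed

theorem AE_frequently_good:
  "AE x in lborel. x \<in> {0..<1} \<longrightarrow> (\<exists>\<^sub>F n in sequentially. good n (cell n x))"
proof (rule AE_I')
  show "(\<Union>m. \<Inter>N. good_free_set (Suc m) N) \<in> null_sets lborel"
    using good_free_null by (intro null_sets_UN) auto
  show "{x \<in> space lborel. \<not> (x \<in> {0..<1} \<longrightarrow> (\<exists>\<^sub>F n in sequentially. good n (cell n x)))}
      \<subseteq> (\<Union>m. \<Inter>N. good_free_set (Suc m) N)"
  proof
    fix x assume "x \<in> {x \<in> space lborel. \<not> (x \<in> {0..<1} \<longrightarrow> (\<exists>\<^sub>F n in sequentially. good n (cell n x)))}"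
    then have x: "0 \<le> x" "x < 1" and "\<exists>m. \<forall>n\<ge>m. \<not> good n (cell n x)"
      by (auto simp: frequently_sequentially)
    then obtain m where "\<And>n. Suc m \<le> n \<Longrightarrow> \<not> good n (cell n x)" by (metis Suc_leD)
    then have "x \<in> good_free_set (Suc m) N" for N using mem_good_free_set[OF x] by blast
    then show "x \<in> (\<Union>m. \<Inter>N. good_free_set (Suc m) N)" by blast
  qed
qed

end

section \<open>The construction\<close>

lemma not_summable_inverse_mult_ln: "\<not> summable (\<lambda>n. 1 / (real n * ln (real n)))"
proof
  define f where "f n = 1 / (real n * ln (real n))" for n :: nat
  define g where "g n = f (max n 2)" for n
  assume "summable (\<lambda>n. 1 / (real n * ln (real n)))"
  moreover have "eventually (\<lambda>n. f n = g n) sequentially"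
    unfolding g_def eventually_sequentially by (intro exI[of _ 2]) simp
  ultimately have "summable g" unfolding f_def[symmetric] by (simp add: summable_cong)
  moreover have "f n \<le> f m" if "2 \<le> m" "m \<le> n" for m n
  proof -
    have "0 < real m * ln (real m)" using that by simp
    moreover have "real m * ln (real m) \<le> real n * ln (real n)"
      using that by (intro mult_mono) auto
    ultimately show ?thesis unfolding f_def by (simp add: frac_le)
  qed
  then have "g (Suc m) \<le> g m" for m unfolding g_def by simp
  moreover have "0 \<le> g n" for n unfolding g_def f_def by simp
  ultimately have "summable (\<lambda>k. 2 ^ k * g (2 ^ k))" by (simp add: condensation_test)
  moreover have "2 ^ k * g (2 ^ k) = inverse (real k) / ln 2" if "k \<ge> 1" for k
  proof -
    have "(2::nat) ^ 1 \<le> 2 ^ k" using that by (intro power_increasing) auto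
    then have "max ((2::nat) ^ k) 2 = 2 ^ k" by simp
    then show ?thesis unfolding g_def f_def by (simp add: ln_realpow field_simps)
  qed
  then have "eventually (\<lambda>k. 2 ^ k * g (2 ^ k) = inverse (real k) / ln 2) sequentially"
    unfolding eventually_sequentially by blast
  ultimately have "summable (\<lambda>k. inverse (real k) / ln 2)" by (simp add: summable_cong)
  then show False using not_summable_harmonic[where 'a = real] by (simp add: summable_divide_iff)
qed

(* Level n of the construction: the fractions a / (n k) used at level n have denominators
   k <= K_n = max_denom c n, and the grid of level n refines that of level n - 1 by the factor
   refinement n K_n. K_n is large compared with the previous grid size (as required by
   cells_near_fractions_in_block_proportion) and with 1 / c n; the height y_n = height c n
   satisfies r^2 + (n K_n y_n)^2 = y_n / ln n for the radius r = 1 / (2 n K_n ln n) of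
   good_cell, which is the hypothesis of min_dist_Rn_ge with h = ln n. *)
definition denom_bound :: "(nat \<Rightarrow> real) \<Rightarrow> nat \<Rightarrow> nat \<Rightarrow> nat" where
  "denom_bound c n G = nat \<lceil>4 * real G + (32 * (1 + 4 * real G))\<^sup>2 + 1 / c n\<rceil> + 1"

definition refinement :: "nat \<Rightarrow> nat \<Rightarrow> nat" where
  "refinement n K = nat \<lceil>2 * ln (real n) * (real n)\<^sup>2 * (real K)\<^sup>2\<rceil> + 1"

fun grid_size :: "(nat \<Rightarrow> real) \<Rightarrow> nat \<Rightarrow> nat" where
  "grid_size c 0 = 1"
| "grid_size c (Suc n) = grid_size c n * refinement (Suc n) (denom_bound c (Suc n) (grid_size c n))"

definition max_denom :: "(nat \<Rightarrow> real) \<Rightarrow> nat \<Rightarrow> nat" where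
  "max_denom c n = denom_bound c n (grid_size c (n - 1))"

definition height :: "(nat \<Rightarrow> real) \<Rightarrow> nat \<Rightarrow> real" where
  "height c n = (if n < 2 then c n / 2
     else 1 / (2 * ln (real n) * (real n)\<^sup>2 * (real (max_denom c n))\<^sup>2))"

definition good_cell :: "(nat \<Rightarrow> real) \<Rightarrow> nat \<Rightarrow> nat \<Rightarrow> bool" where
  "good_cell c n = cell_near_fraction n (max_denom c n)
     (1 / (2 * ln (real n) * real n * real (max_denom c n))) (grid_size c n)"

definition good_proportion :: "nat \<Rightarrow> real" where
  "good_proportion n = (if n < 2 then 0 else 1 / (128 * ln (real n) * real n))"

lemma grid_size_Suc: "grid_size c (Suc n) = grid_size c n * refinement (Suc n) (max_denom c (Suc n))"
  by (simp add: max_denom_def)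

lemma grid_size_pos: "grid_size c n > 0"
  by (induction n) (auto simp: refinement_def)

lemma max_denom_ge:
  assumes "c n > 0"
  shows "4 * real (grid_size c (n - 1)) \<le> real (max_denom c n)"
    and "(32 * (1 + 4 * real (grid_size c (n - 1))))\<^sup>2 \<le> real (max_denom c n)"
    and "1 / c n < real (max_denom c n)"
proof -
  define G where "G = real (grid_size c (n - 1))"
  have "4 * G + (32 * (1 + 4 * G))\<^sup>2 + 1 / c n < real (max_denom c n)"
    unfolding max_denom_def denom_bound_def G_def by linarith
  moreover have "G \<ge> 0" "1 / c n > 0" "(32 * (1 + 4 * G))\<^sup>2 \<ge> 0" using assms unfolding G_def by auto
  ultimately show "4 * real (grid_size c (n - 1)) \<le> real (max_denom c n)"
    and "(32 * (1 + 4 * real (grid_size c (n - 1))))\<^sup>2 \<le> real (max_denom c n)"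
    and "1 / c n < real (max_denom c n)"
    unfolding G_def by linarith+
qed

lemma refinement_ge: "2 * ln (real n) * (real n)\<^sup>2 * (real K)\<^sup>2 \<le> real (refinement n K)"
  unfolding refinement_def by linarith

lemma ln_mult_ge_one: "n \<ge> 2 \<Longrightarrow> 1 \<le> ln (real n) * real n"
proof -
  assume n: "n \<ge> 2"
  have "ln 2 \<le> ln (real n)" using n by simp
  then have "2 / 3 \<le> ln (real n)" using ln2_ge_two_thirds by linarith
  then have "2 / 3 * 2 \<le> ln (real n) * real n" using n by (intro mult_mono) auto
  then show ?thesis by linarith
qed

lemma height_bounds:
  assumes c: "c n > 0"
  shows "0 < height c n \<and> height c n < c n"
proof (cases "n < 2")
  case False
  define K where "K = real (max_denom c n)"
  have "4 * real (grid_size c (n - 1)) \<le> K" unfolding K_def using max_denom_ge(1)[of c n, OF c] .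
  then have K: "1 \<le> K" using grid_size_pos[of c "n - 1"] by linarith
  have "1 * 1 * 1 \<le> (ln (real n) * real n) * real n * K"
    using ln_mult_ge_one[of n] False K by (intro mult_mono) auto
  then have D: "K \<le> 2 * ln (real n) * (real n)\<^sup>2 * K\<^sup>2"
    using K by (simp add: power2_eq_square)
  then have "1 / (2 * ln (real n) * (real n)\<^sup>2 * K\<^sup>2) \<le> 1 / K"
    using K False by (intro divide_left_mono) (auto intro!: mult_pos_pos)
  moreover have "1 / K < c n" using max_denom_ge(3)[of c n, OF c] c K unfolding K_def by (simp add: field_simps)
  ultimately show ?thesis
    using False K D unfolding height_def K_def[symmetric] by simp
qed (use c in \<open>simp add: height_def\<close>)

lemma nested_grids_construction:
  assumes c: "\<And>n. c n > 0"
  shows "nested_grids (grid_size c) (\<lambda>n. refinement n (max_denom c n)) (good_cell c) good_proportion"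
proof
  fix n
  show "grid_size c (Suc n) = grid_size c n * refinement (Suc n) (max_denom c (Suc n))"
    by (rule grid_size_Suc)
  show "0 < refinement n (max_denom c n)" by (simp add: refinement_def)
  show "0 \<le> good_proportion n" by (simp add: good_proportion_def)
  show "good_proportion n \<le> 1"
  proof (cases "n < 2")
    case False
    then have "1 \<le> 128 * ln (real n) * real n" using ln_mult_ge_one[of n] by simp
    then show ?thesis using False by (simp add: good_proportion_def)
  qed (simp add: good_proportion_def)
next
  fix n i assume i: "i < grid_size c n"
  show "good_proportion (Suc n) * real (refinement (Suc n) (max_denom c (Suc n)))
      \<le> real (card {c'. c' div refinement (Suc n) (max_denom c (Suc n)) = i \<and> good_cell c (Suc n) c'})"
  proof (cases "Suc n < 2")
    case False
    have "real (refinement (Suc n) (max_denom c (Suc n))) / (128 * ln (real (Suc n)) * real (Suc n))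
        \<le> real (card {c'. c' div refinement (Suc n) (max_denom c (Suc n)) = i \<and> good_cell c (Suc n) c'})"
      unfolding good_cell_def grid_size_Suc
      using ln_mult_ge_one[of "Suc n"] False max_denom_ge[of c "Suc n", OF c] grid_size_pos[of c n] i
      by (intro cells_near_fractions_in_block_proportion refinement_ge) auto
    then show ?thesis using False by (simp add: good_proportion_def)
  qed (simp add: good_proportion_def)
next
  show "grid_size c 0 = 1" by simp
  have "eventually (\<lambda>n. 1 / 128 * (1 / (real n * ln (real n))) = good_proportion n) sequentially"
    unfolding eventually_sequentially good_proportion_def by (intro exI[of _ 2]) auto
  then have "summable good_proportion \<longleftrightarrow> summable (\<lambda>n. 1 / 128 * (1 / (real n * ln (real n))))"
    by (simp add: summable_cong)
  then show "\<not> summable good_proportion"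
    using not_summable_inverse_mult_ln summable_cmult_iff[of "1 / 128" "\<lambda>n. 1 / (real n * ln (real n))"]
    by simp
qed

lemma min_dist_Rn_ge_if_good_cell:
  assumes z0: "Im z0 > 0" and c: "c n > 0" and n: "n \<ge> 2" and x: "0 \<le> x" "x < 1"
    and good: "good_cell c n (nat \<lfloor>real (grid_size c n) * x\<rfloor>)"
  shows "ln (ln (real n)) - ln (max (Im z0) (1 / Im z0)) \<le> min_dist_Rn z0 n x (height c n)"
proof -
  define K G h where "K = real (max_denom c n)" and "G = grid_size c n" and "h = ln (real n)"
  define r where "r = 1 / (2 * h * real n * K)"
  define cl where "cl = nat \<lfloor>real G * x\<rfloor>"
  have G: "real G > 0" unfolding G_def using grid_size_pos by simp
  have h: "h > 0" unfolding h_def using n by simp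
  have K: "K \<ge> 1" unfolding K_def using max_denom_ge(1)[of c n, OF c] grid_size_pos[of c "n - 1"] by linarith
  have "real cl = of_int \<lfloor>real G * x\<rfloor>" unfolding cl_def using x G by simp
  then have "real cl \<le> real G * x" "real G * x \<le> real cl + 1" by linarith+
  then have "real cl / real G \<le> x" "x \<le> (real cl + 1) / real G"
    using G by (simp_all add: field_simps)
  moreover have "cell_near_fraction n (max_denom c n) r G cl"
    using good unfolding good_cell_def r_def h_def K_def G_def cl_def .
  moreover have "n \<ge> 1" using n by simp
  ultimately obtain k a where k: "k \<in> {1..max_denom c n}"
    and close: "\<bar>real n * real k * x - of_int a\<bar> \<le> r"
    using cell_near_fraction_imp_close by blast
  have y: "height c n = 1 / (2 * h * (real n)\<^sup>2 * K\<^sup>2)"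
    unfolding height_def h_def K_def using n by simp
  have "(real n * real k * height c n)\<^sup>2 \<le> (real n * K * height c n)\<^sup>2"
    using k height_bounds[of c n, OF c] unfolding K_def by (intro power_mono mult_right_mono mult_left_mono) auto
  moreover have "r\<^sup>2 + (real n * K * height c n)\<^sup>2 = height c n / h"
    unfolding y r_def using h n K by (simp add: field_simps power2_eq_square)
  ultimately have "r\<^sup>2 + (real n * real k * height c n)\<^sup>2 \<le> height c n / h" by linarith
  then show ?thesis
    using min_dist_Rn_ge[OF z0 _ _ _ h close] n k height_bounds[of c n, OF c] unfolding h_def by simp
qed

lemma Limsup_ratio_ge_one:
  fixes f g :: "nat \<Rightarrow> real"
  assumes g: "filterlim g at_top sequentially" and f: "\<exists>\<^sub>F n in sequentially. g n - C \<le> f n"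
  shows "1 \<le> Limsup sequentially (\<lambda>n. ereal (f n / g n))"
proof (rule ccontr)
  assume "\<not> ?thesis"
  then have "Limsup sequentially (\<lambda>n. ereal (f n / g n)) < 1" by (simp add: not_le)
  from ereal_dense2[OF this] obtain l
    where l: "Limsup sequentially (\<lambda>n. ereal (f n / g n)) < ereal l" "ereal l < 1" by blast
  then have l1: "l < 1" by simp
  have "eventually (\<lambda>n. f n / g n < l) sequentially"
    using Limsup_lessD[OF l(1)] by simp
  moreover have "\<forall>Z. eventually (\<lambda>n. Z \<le> g n) sequentially"
    using g by (simp add: filterlim_at_top)
  then have "eventually (\<lambda>n. max 1 (C / (1 - l) + 1) \<le> g n) sequentially" by (rule spec)
  ultimately have "\<exists>\<^sub>F n in sequentially. g n - C \<le> f n \<and> (f n / g n < l \<and> max 1 (C / (1 - l) + 1) \<le> g n)"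
    by (intro frequently_eventually_frequently[OF f] eventually_conj)
  then obtain n where n: "g n - C \<le> f n" "f n / g n < l" "max 1 (C / (1 - l) + 1) \<le> g n"
    by (auto dest: frequently_ex)
  then have "g n - C < l * g n" by (simp add: divide_less_eq)
  then have "g n * (1 - l) < C" by (simp add: algebra_simps)
  then have "g n < C / (1 - l)" using l1 by (simp add: pos_less_divide_eq)
  with n(3) show False by simp
qed

theorem theorem1p6:
  fixes z0 :: complex and c :: "nat \<Rightarrow> real"
  assumes "z0 \<in> upper_half_plane"
    and "\<And>n. c n > 0"
  shows "\<exists>y :: nat \<Rightarrow> real. (\<forall>n. 0 < y n \<and> y n < c n) \<and>
           (AE x in lborel. x \<in> {0..<1} \<longrightarrow>
              Limsup sequentially (\<lambda>n. ereal (min_dist_Rn z0 n x (y n) / ln (ln (real n)))) \<ge> 1)"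
proof (intro exI conjI)
  have z0: "Im z0 > 0" using assms(1) by (simp add: upper_half_plane_def)
  interpret grids: nested_grids "grid_size c" "\<lambda>n. refinement n (max_denom c n)" "good_cell c" good_proportion
    using nested_grids_construction assms(2) .
  show "\<forall>n. 0 < height c n \<and> height c n < c n"
    using height_bounds assms(2) by blast
  show "AE x in lborel. x \<in> {0..<1} \<longrightarrow>
      1 \<le> Limsup sequentially (\<lambda>n. ereal (min_dist_Rn z0 n x (height c n) / ln (ln (real n))))"
    using grids.AE_frequently_good
  proof (rule eventually_mono, intro impI)
    fix x assume x: "x \<in> {0..<1}" and "x \<in> {0..<1} \<longrightarrow> (\<exists>\<^sub>F n in sequentially. good_cell c n (grids.cell n x))"
    then have "\<exists>\<^sub>F n in sequentially. good_cell c n (grids.cell n x) \<and> n \<ge> 2"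
      by (auto intro: frequently_eventually_frequently simp: eventually_ge_at_top)
    then have "\<exists>\<^sub>F n in sequentially.
        ln (ln (real n)) - ln (max (Im z0) (1 / Im z0)) \<le> min_dist_Rn z0 n x (height c n)"
      using x z0 assms(2) by (elim frequently_elim1) (auto intro: min_dist_Rn_ge_if_good_cell simp: grids.cell_def)
    moreover have "filterlim (\<lambda>n. ln (ln (real n))) at_top sequentially"
      by (intro filterlim_compose[OF ln_at_top] filterlim_compose[OF ln_at_top filterlim_real_sequentially])
    ultimately show "1 \<le> Limsup sequentially (\<lambda>n. ereal (min_dist_Rn z0 n x (height c n) / ln (ln (real n))))"
      by (intro Limsup_ratio_ge_one)
  qed
qed

end
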